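(* Let $(\Omega,\Sigma,\mu)$ be a measure space with the direct sum property, $L^0=L^0(\Omega,\Sigma,\mu)$, and $n\in\mathbb N$. Every derivation $D$ on the algebra $M_n(L^0)$ of $n\times n$ matrices over $L^0$ admits a unique decomposition $$D=D_a+D_\delta,$$ where $D_a(x)=ax-xa$ for some $a\in M_n(L^0)$ is an inner derivation and $D_\delta$ is the derivation given by $D_\delta((\lambda_{ij})_{i,j=1}^n)=(\delta(\lambda_{ij}))_{i,j=1}^n$ for some derivation $\delta:L^0\to L^0$. Uniqueness means: if $D=D_{a_1}+D_{\delta_1}=D_{a_2}+D_{\delta_2}$ then $\delta_1=\delta_2$ and $D_{a_1}=D_{a_2}$.
   Context: A linear map $D:A\to A$ on a complex algebra is a derivation if $D(xy)=D(x)y+xD(y)$ for all $x,y$. $L^0(\Omega,\Sigma,\mu)$ is the algebra of equivalence classes (a.e. equality) of complex measurable functions. Direct sum property of $\mu$: there is a family $\{\Omega_i\}_{i\in J}\subset\Sigma$ with $0<\mu(\Omega_i)<\infty$ such that each $A\in\Sigma$ with $\mu(A)<\infty$ equals $\bigcup_{i\in J_0}(A\cap\Omega_i)\cup B$ for some countable $J_0\subset J$ and a null set $B$. *)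

theory Defs
  imports "HOL-Probability.Probability"
begin

text \<open>L^0(Omega,Sigma,mu) is modelled as the setoid of complex measurable
functions on the space of M, modulo equality almost everywhere.\<close>

definition L0 :: "'a measure \<Rightarrow> ('a \<Rightarrow> complex) set" where
  "L0 M = borel_measurable M"

definition ae_eq :: "'a measure \<Rightarrow> ('a \<Rightarrow> complex) \<Rightarrow> ('a \<Rightarrow> complex) \<Rightarrow> bool" where
  "ae_eq M f g \<longleftrightarrow> (AE x in M. f x = g x)"

definition direct_sum_property :: "'a measure \<Rightarrow> bool" where
  "direct_sum_property M \<longleftrightarrow>
     (\<exists>J::'i set. \<exists>\<Omega>i :: 'i \<Rightarrow> 'a set.
        (\<forall>i\<in>J. \<Omega>i i \<in> sets M \<and> 0 < emeasure M (\<Omega>i i) \<and> emeasure M (\<Omega>i i) < \<infinity>) \<and>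
        (\<forall>A\<in>sets M. emeasure M A < \<infinity> \<longrightarrow>
           (\<exists>J0 \<subseteq> J. countable J0 \<and> (\<exists>B \<in> null_sets M.
              A = (\<Union>i\<in>J0. A \<inter> \<Omega>i i) \<union> B))))"

definition L0_derivation :: "'a measure \<Rightarrow> (('a \<Rightarrow> complex) \<Rightarrow> ('a \<Rightarrow> complex)) \<Rightarrow> bool" where
  "L0_derivation M \<delta> \<longleftrightarrow>
     (\<forall>f\<in>L0 M. \<delta> f \<in> L0 M) \<and>
     (\<forall>f\<in>L0 M. \<forall>g\<in>L0 M. ae_eq M f g \<longrightarrow> ae_eq M (\<delta> f) (\<delta> g)) \<and>
     (\<forall>f\<in>L0 M. \<forall>g\<in>L0 M. \<forall>c::complex.
        ae_eq M (\<delta> (\<lambda>x. c * f x + g x)) (\<lambda>x. c * \<delta> f x + \<delta> g x)) \<and>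
     (\<forall>f\<in>L0 M. \<forall>g\<in>L0 M.
        ae_eq M (\<delta> (\<lambda>x. f x * g x)) (\<lambda>x. \<delta> f x * g x + f x * \<delta> g x))"

text \<open>n x n matrices over L^0: entries X i j for i, j < n (other entries irrelevant).\<close>
type_synonym 'a L0mat = "nat \<Rightarrow> nat \<Rightarrow> 'a \<Rightarrow> complex"

definition matL0 :: "'a measure \<Rightarrow> nat \<Rightarrow> 'a L0mat set" where
  "matL0 M n = {X. \<forall>i<n. \<forall>j<n. X i j \<in> L0 M}"

definition mat_eq :: "'a measure \<Rightarrow> nat \<Rightarrow> 'a L0mat \<Rightarrow> 'a L0mat \<Rightarrow> bool" where
  "mat_eq M n X Y \<longleftrightarrow> (\<forall>i<n. \<forall>j<n. ae_eq M (X i j) (Y i j))"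

definition mat_add :: "'a L0mat \<Rightarrow> 'a L0mat \<Rightarrow> 'a L0mat" where
  "mat_add X Y = (\<lambda>i j x. X i j x + Y i j x)"

definition mat_diff :: "'a L0mat \<Rightarrow> 'a L0mat \<Rightarrow> 'a L0mat" where
  "mat_diff X Y = (\<lambda>i j x. X i j x - Y i j x)"

definition mat_scale :: "complex \<Rightarrow> 'a L0mat \<Rightarrow> 'a L0mat" where
  "mat_scale c X = (\<lambda>i j x. c * X i j x)"

definition mat_mult :: "nat \<Rightarrow> 'a L0mat \<Rightarrow> 'a L0mat \<Rightarrow> 'a L0mat" where
  "mat_mult n X Y = (\<lambda>i j x. \<Sum>k<n. X i k x * Y k j x)"

definition mat_derivation :: "'a measure \<Rightarrow> nat \<Rightarrow> ('a L0mat \<Rightarrow> 'a L0mat) \<Rightarrow> bool" where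
  "mat_derivation M n D \<longleftrightarrow>
     (\<forall>X\<in>matL0 M n. D X \<in> matL0 M n) \<and>
     (\<forall>X\<in>matL0 M n. \<forall>Y\<in>matL0 M n. mat_eq M n X Y \<longrightarrow> mat_eq M n (D X) (D Y)) \<and>
     (\<forall>X\<in>matL0 M n. \<forall>Y\<in>matL0 M n. \<forall>c::complex.
        mat_eq M n (D (mat_add (mat_scale c X) Y)) (mat_add (mat_scale c (D X)) (D Y))) \<and>
     (\<forall>X\<in>matL0 M n. \<forall>Y\<in>matL0 M n.
        mat_eq M n (D (mat_mult n X Y)) (mat_add (mat_mult n (D X) Y) (mat_mult n X (D Y))))"

definition inner_der :: "nat \<Rightarrow> 'a L0mat \<Rightarrow> 'a L0mat \<Rightarrow> 'a L0mat" where
  "inner_der n a X = mat_diff (mat_mult n a X) (mat_mult n X a)"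

definition entry_der :: "(('a \<Rightarrow> complex) \<Rightarrow> ('a \<Rightarrow> complex)) \<Rightarrow> 'a L0mat \<Rightarrow> 'a L0mat" where
  "entry_der \<delta> X = (\<lambda>i j. \<delta> (X i j))"

end

theory Submission
  imports Defs
begin

text \<open>Write E_ij for the matrix units and a_pq = D(E_q0)_p0. The map f \<mapsto> f E_00 is
  multiplicative, so \<delta>(f) = D(f E_00)_00 is a derivation of L^0. Since X_ij E_00 = E_0i X E_j0,
  the Leibniz rule gives \<delta>(X_ij) = \<Sum>_m D(E_0i)_0m X_mj + D(X)_ij + \<Sum>_m X_im a_mj, and the
  Leibniz rule applied to E_0i E_m0 = [i = m] E_00 (with D(E_00)_00 = 0, from E_00 E_00 = E_00)
  gives D(E_0i)_0m = -a_im; hence D = D_a + D_\<delta>. For uniqueness, every inner derivation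
  vanishes at the (0,0) entry of f E_00, so \<delta> is recovered from D alone.\<close>

definition mat_unit :: "nat \<Rightarrow> nat \<Rightarrow> 'a L0mat" where
  "mat_unit i j = (\<lambda>p q x. if p = i \<and> q = j then 1 else 0)"

definition mat_corner :: "('a \<Rightarrow> complex) \<Rightarrow> 'a L0mat" where
  "mat_corner f = (\<lambda>p q x. if p = 0 \<and> q = 0 then f x else 0)"

lemma mat_unit_in_matL0: "mat_unit i j \<in> matL0 M n"
  unfolding matL0_def L0_def mat_unit_def by auto

lemma mat_corner_in_matL0: "f \<in> L0 M \<Longrightarrow> mat_corner f \<in> matL0 M n"
  unfolding matL0_def L0_def mat_corner_def by auto

lemma zero_in_matL0: "(\<lambda>p q x. 0) \<in> matL0 M n"
  unfolding matL0_def L0_def by auto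

lemma mat_mult_in_matL0: "X \<in> matL0 M n \<Longrightarrow> Y \<in> matL0 M n \<Longrightarrow> mat_mult n X Y \<in> matL0 M n"
  unfolding matL0_def L0_def mat_mult_def by (auto intro!: borel_measurable_sum borel_measurable_times)

lemma mat_mult_unit_left:
  "i < n \<Longrightarrow> mat_mult n (mat_unit r i) W p q x = (if p = r then W i q x else 0)"
  unfolding mat_mult_def mat_unit_def by (cases "p = r") (simp_all add: mult_if_delta)

lemma mat_mult_unit_right:
  "j < n \<Longrightarrow> mat_mult n W (mat_unit j s) p q x = (if q = s then W p j x else 0)"
  unfolding mat_mult_def mat_unit_def by (cases "q = s") (simp_all add: if_distrib cong: if_cong)

lemma mat_mult_units:
  "j < n \<Longrightarrow> mat_mult n (mat_unit i j) (mat_unit k l) = (if j = k then mat_unit i l else (\<lambda>p q x. 0))"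
  by (intro ext) (simp only: mat_mult_unit_left, simp add: mat_unit_def)

lemma mat_mult_zero: "mat_mult n (\<lambda>p q x. 0) (\<lambda>p q x. 0) = (\<lambda>p q x. 0)"
  unfolding mat_mult_def by simp

lemma mat_corner_eq_unit_product:
  "i < n \<Longrightarrow> j < n \<Longrightarrow> mat_mult n (mat_unit 0 i) (mat_mult n X (mat_unit j 0)) = mat_corner (X i j)"
  by (intro ext) (simp add: mat_mult_unit_left mat_mult_unit_right mat_corner_def)

lemma mat_mult_corner_left:
  assumes "0 < n"
  shows "mat_mult n (mat_corner f) W p q x = (if p = 0 then f x * W 0 q x else 0)"
proof -
  have "mat_mult n (mat_corner f) W p q x = (\<Sum>k<n. if k = 0 then (if p = 0 then f x * W 0 q x else 0) else 0)"
    unfolding mat_mult_def mat_corner_def by (rule sum.cong) auto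
  then show ?thesis using assms by simp
qed

lemma mat_mult_corner_right:
  assumes "0 < n"
  shows "mat_mult n W (mat_corner g) p q x = (if q = 0 then W p 0 x * g x else 0)"
proof -
  have "mat_mult n W (mat_corner g) p q x = (\<Sum>k<n. if k = 0 then (if q = 0 then W p 0 x * g x else 0) else 0)"
    unfolding mat_mult_def mat_corner_def by (rule sum.cong) auto
  then show ?thesis using assms by simp
qed

lemma mat_mult_corners:
  "0 < n \<Longrightarrow> mat_mult n (mat_corner f) (mat_corner g) = mat_corner (\<lambda>x. f x * g x)"
  by (intro ext) (simp only: mat_mult_corner_left, simp add: mat_corner_def)

lemma inner_der_corner_00: "0 < n \<Longrightarrow> inner_der n a (mat_corner f) 0 0 x = 0"
  unfolding inner_der_def mat_diff_def by (simp add: mat_mult_corner_left mat_mult_corner_right)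

lemma mat_derivation_closed: "mat_derivation M n D \<Longrightarrow> X \<in> matL0 M n \<Longrightarrow> D X \<in> matL0 M n"
  unfolding mat_derivation_def by blast

lemma mat_derivation_cong:
  "mat_derivation M n D \<Longrightarrow> X \<in> matL0 M n \<Longrightarrow> Y \<in> matL0 M n \<Longrightarrow> mat_eq M n X Y \<Longrightarrow>
    mat_eq M n (D X) (D Y)"
  unfolding mat_derivation_def by blast

lemma mat_derivation_linear:
  "mat_derivation M n D \<Longrightarrow> X \<in> matL0 M n \<Longrightarrow> Y \<in> matL0 M n \<Longrightarrow>
    mat_eq M n (D (mat_add (mat_scale c X) Y)) (mat_add (mat_scale c (D X)) (D Y))"
  unfolding mat_derivation_def by blast

lemma mat_derivation_leibniz_entry:
  assumes "mat_derivation M n D" "X \<in> matL0 M n" "Y \<in> matL0 M n" "p < n" "q < n"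
  shows "AE x in M. D (mat_mult n X Y) p q x = mat_mult n (D X) Y p q x + mat_mult n X (D Y) p q x"
  using assms unfolding mat_derivation_def mat_eq_def ae_eq_def mat_add_def by blast

lemma mat_derivation_zero:
  assumes "mat_derivation M n D" "p < n" "q < n"
  shows "AE x in M. D (\<lambda>p q x. 0) p q x = 0"
  using mat_derivation_leibniz_entry[OF assms(1) zero_in_matL0 zero_in_matL0 assms(2,3)]
  by (simp add: mat_mult_zero) (simp add: mat_mult_def)

lemma mat_derivation_unit_00:
  assumes "mat_derivation M n D" "0 < n"
  shows "AE x in M. D (mat_unit 0 0) 0 0 x = 0"
  using mat_derivation_leibniz_entry[OF assms(1) mat_unit_in_matL0 mat_unit_in_matL0 assms(2,2), of 0 0 0 0]
  by (simp add: mat_mult_units mat_mult_unit_left mat_mult_unit_right assms(2))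

lemma mat_derivation_unit_skew:
  assumes d: "mat_derivation M n D" and "i < n" "m < n"
  shows "AE x in M. D (mat_unit 0 i) 0 m x = - D (mat_unit m 0) i 0 x"
proof -
  have n: "0 < n" using assms by simp
  have "AE x in M. D (mat_unit 0 0) 0 0 x = 0" "AE x in M. D (\<lambda>p q x. 0) 0 0 x = 0"
    using mat_derivation_unit_00[OF d n] mat_derivation_zero[OF d n n] .
  with mat_derivation_leibniz_entry[OF d mat_unit_in_matL0 mat_unit_in_matL0 n n, of 0 i m 0]
  show ?thesis
    by eventually_elim
      (auto simp: mat_mult_units mat_mult_unit_left mat_mult_unit_right assms eq_neg_iff_add_eq_0
        split: if_splits)
qed

definition inner_coeff :: "('a L0mat \<Rightarrow> 'a L0mat) \<Rightarrow> 'a L0mat" where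
  "inner_coeff D = (\<lambda>p q x. D (mat_unit q 0) p 0 x)"

definition corner_der :: "('a L0mat \<Rightarrow> 'a L0mat) \<Rightarrow> ('a \<Rightarrow> complex) \<Rightarrow> ('a \<Rightarrow> complex)" where
  "corner_der D f = (\<lambda>x. D (mat_corner f) 0 0 x)"

lemma inner_coeff_in_matL0:
  assumes "mat_derivation M n D" "0 < n"
  shows "inner_coeff D \<in> matL0 M n"
  using mat_derivation_closed[OF assms(1) mat_unit_in_matL0] assms(2) unfolding matL0_def inner_coeff_def by auto

lemma corner_der_L0_derivation:
  assumes d: "mat_derivation M n D" and n: "0 < n"
  shows "L0_derivation M (corner_der D)"
  unfolding L0_derivation_def
proof (intro conjI ballI allI impI)
  fix f assume "f \<in> L0 M"
  then show "corner_der D f \<in> L0 M"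
    using mat_derivation_closed[OF d mat_corner_in_matL0] n
    unfolding matL0_def corner_der_def by auto
next
  fix f g assume f: "f \<in> L0 M" and g: "g \<in> L0 M" and "ae_eq M f g"
  then have "mat_eq M n (mat_corner f) (mat_corner g)"
    unfolding mat_eq_def ae_eq_def mat_corner_def by auto
  from mat_derivation_cong[OF d mat_corner_in_matL0[OF f] mat_corner_in_matL0[OF g] this]
  show "ae_eq M (corner_der D f) (corner_der D g)"
    unfolding mat_eq_def corner_der_def using n by auto
next
  fix f g c assume f: "f \<in> L0 M" and g: "g \<in> L0 M"
  have "mat_corner (\<lambda>x. c * f x + g x) = mat_add (mat_scale c (mat_corner f)) (mat_corner g)"
    unfolding mat_corner_def mat_add_def mat_scale_def by (intro ext) simp
  with mat_derivation_linear[OF d mat_corner_in_matL0[OF f] mat_corner_in_matL0[OF g], of c]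
  show "ae_eq M (corner_der D (\<lambda>x. c * f x + g x)) (\<lambda>x. c * corner_der D f x + corner_der D g x)"
    unfolding mat_eq_def corner_der_def mat_add_def mat_scale_def using n by auto
next
  fix f g assume f: "f \<in> L0 M" and g: "g \<in> L0 M"
  from mat_derivation_leibniz_entry[OF d mat_corner_in_matL0[OF f] mat_corner_in_matL0[OF g] n n]
  show "ae_eq M (corner_der D (\<lambda>x. f x * g x)) (\<lambda>x. corner_der D f x * g x + f x * corner_der D g x)"
    unfolding ae_eq_def corner_der_def mat_mult_corners[OF n]
      mat_mult_corner_left[OF n] mat_mult_corner_right[OF n]
    by (simp add: mat_corner_def)
qed

lemma mat_derivation_entry_decomposition:
  assumes d: "mat_derivation M n D" and X: "X \<in> matL0 M n" and ij: "i < n" "j < n"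
  shows "AE x in M. D X i j x = inner_der n (inner_coeff D) X i j x + corner_der D (X i j) x"
proof -
  have n: "0 < n" using ij by simp
  define Z where "Z = mat_mult n X (mat_unit j 0)"
  have Z: "Z \<in> matL0 M n" unfolding Z_def by (rule mat_mult_in_matL0[OF X mat_unit_in_matL0])
  have "AE x in M. D (mat_mult n (mat_unit 0 i) Z) 0 0 x =
      mat_mult n (D (mat_unit 0 i)) Z 0 0 x + mat_mult n (mat_unit 0 i) (D Z) 0 0 x"
    by (rule mat_derivation_leibniz_entry[OF d mat_unit_in_matL0 Z n n])
  then have corner: "AE x in M. corner_der D (X i j) x =
      (\<Sum>k<n. D (mat_unit 0 i) 0 k x * X k j x) + D Z i 0 x"
    unfolding corner_der_def Z_def mat_corner_eq_unit_product[OF ij, symmetric]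
    by (simp add: mat_mult_def[of n "D (mat_unit 0 i)"] mat_mult_unit_left mat_mult_unit_right ij)
  have "AE x in M. D Z i 0 x =
      mat_mult n (D X) (mat_unit j 0) i 0 x + mat_mult n X (D (mat_unit j 0)) i 0 x"
    unfolding Z_def by (rule mat_derivation_leibniz_entry[OF d X mat_unit_in_matL0 ij(1) n])
  then have DZ: "AE x in M. D Z i 0 x = D X i j x + (\<Sum>k<n. X i k x * inner_coeff D k j x)"
    by (simp add: mat_mult_unit_right ij mat_mult_def[of n X] inner_coeff_def)
  have skew: "AE x in M. \<forall>k\<in>{..<n}. D (mat_unit 0 i) 0 k x = - inner_coeff D i k x"
    using mat_derivation_unit_skew[OF d ij(1)] unfolding inner_coeff_def
    by (intro AE_finite_allI) auto
  from corner DZ skew show ?thesis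
  proof eventually_elim
    case (elim x)
    have "(\<Sum>k<n. D (mat_unit 0 i) 0 k x * X k j x) = - (\<Sum>k<n. inner_coeff D i k x * X k j x)"
      using elim(3) by (simp add: sum_negf[symmetric])
    with elim(1,2) show ?case
      unfolding inner_der_def mat_diff_def mat_mult_def by simp
  qed
qed

lemma decomposition_determines_der:
  assumes n: "0 < n" and f: "f \<in> L0 M"
    and decomp: "\<forall>X\<in>matL0 M n. mat_eq M n (D X) (mat_add (inner_der n a X) (entry_der \<delta> X))"
  shows "AE x in M. corner_der D f x = \<delta> f x"
proof -
  have "AE x in M. D (mat_corner f) 0 0 x = inner_der n a (mat_corner f) 0 0 x + \<delta> (mat_corner f 0 0) x"
    using decomp[rule_format, OF mat_corner_in_matL0[OF f]] n
    unfolding mat_eq_def ae_eq_def mat_add_def entry_der_def by blast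
  moreover have "mat_corner f 0 0 = f" unfolding mat_corner_def by simp
  ultimately show ?thesis
    unfolding corner_der_def inner_der_corner_00[OF n] by simp
qed

lemma derivation_decomposition_exists:
  assumes d: "mat_derivation M n D" and n: "0 < n"
  shows "\<exists>a\<in>matL0 M n. \<exists>\<delta>. L0_derivation M \<delta> \<and>
           (\<forall>X\<in>matL0 M n. mat_eq M n (D X) (mat_add (inner_der n a X) (entry_der \<delta> X)))"
  using inner_coeff_in_matL0[OF d n] corner_der_L0_derivation[OF d n]
    mat_derivation_entry_decomposition[OF d]
  unfolding mat_eq_def ae_eq_def mat_add_def entry_der_def by blast

lemma derivation_decomposition_unique:
  assumes n: "0 < n"
    and decomp1: "\<forall>X\<in>matL0 M n. mat_eq M n (D X) (mat_add (inner_der n a1 X) (entry_der \<delta>1 X))"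
    and decomp2: "\<forall>X\<in>matL0 M n. mat_eq M n (D X) (mat_add (inner_der n a2 X) (entry_der \<delta>2 X))"
  shows "(\<forall>f\<in>L0 M. ae_eq M (\<delta>1 f) (\<delta>2 f)) \<and>
         (\<forall>X\<in>matL0 M n. mat_eq M n (inner_der n a1 X) (inner_der n a2 X))"
proof (intro conjI ballI)
  have der_eq: "AE x in M. \<delta>1 f x = \<delta>2 f x" if "f \<in> L0 M" for f
    using decomposition_determines_der[OF n that decomp1] decomposition_determines_der[OF n that decomp2]
    by eventually_elim simp
  then show "ae_eq M (\<delta>1 f) (\<delta>2 f)" if "f \<in> L0 M" for f
    using that unfolding ae_eq_def .
  fix X assume X: "X \<in> matL0 M n"
  show "mat_eq M n (inner_der n a1 X) (inner_der n a2 X)"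
    unfolding mat_eq_def ae_eq_def
  proof (intro allI impI)
    fix i j assume "i < n" "j < n"
    with X decomp1 decomp2 der_eq[of "X i j"]
    have "AE x in M. D X i j x = inner_der n a1 X i j x + \<delta>1 (X i j) x"
      "AE x in M. D X i j x = inner_der n a2 X i j x + \<delta>2 (X i j) x"
      "AE x in M. \<delta>1 (X i j) x = \<delta>2 (X i j) x"
      unfolding matL0_def mat_eq_def ae_eq_def mat_add_def entry_der_def by auto
    then show "AE x in M. inner_der n a1 X i j x = inner_der n a2 X i j x"
      by eventually_elim simp
  qed
qed

theorem lemma3p1:
  fixes M :: "'a measure" and n :: nat and D :: "'a L0mat \<Rightarrow> 'a L0mat"
  assumes "direct_sum_property TYPE('i) M"
    and "n \<ge> 1"
    and "mat_derivation M n D"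
  shows "(\<exists>a\<in>matL0 M n. \<exists>\<delta>. L0_derivation M \<delta> \<and>
            (\<forall>X\<in>matL0 M n. mat_eq M n (D X) (mat_add (inner_der n a X) (entry_der \<delta> X))))
       \<and> (\<forall>a1\<in>matL0 M n. \<forall>a2\<in>matL0 M n. \<forall>\<delta>1 \<delta>2.
            L0_derivation M \<delta>1 \<longrightarrow> L0_derivation M \<delta>2 \<longrightarrow>
            (\<forall>X\<in>matL0 M n. mat_eq M n (D X) (mat_add (inner_der n a1 X) (entry_der \<delta>1 X))) \<longrightarrow>
            (\<forall>X\<in>matL0 M n. mat_eq M n (D X) (mat_add (inner_der n a2 X) (entry_der \<delta>2 X))) \<longrightarrow>
            (\<forall>f\<in>L0 M. ae_eq M (\<delta>1 f) (\<delta>2 f)) \<and>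
            (\<forall>X\<in>matL0 M n. mat_eq M n (inner_der n a1 X) (inner_der n a2 X)))"
proof -
  have n: "0 < n" using assms(2) by simp
  show ?thesis
    using derivation_decomposition_exists[OF assms(3) n] derivation_decomposition_unique[OF n]
    by blast
qed

end
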